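(* Let $E=(E^0,E^1,r,s)$ be a graph. (a) Let $k$ be a field. If $\alpha,\beta\in\partial E$ and there exists a nonzero $k$-linear map $T:V_{([\alpha],k)}\to V_{([\beta],k)}$ such that $T\circ\rho_{([\alpha],k)}(a)=\rho_{([\beta],k)}(a)\circ T$ for all $a\in L_k(E)$, then $[\alpha]=[\beta]$ and $T=z\,\mathrm{Id}_{V_{([\alpha],k)}}$ for some $z\in k$. Consequently, for any $\alpha,\beta\in\partial E$ with $[\alpha]\ne[\beta]$ we have $\mathrm{End}_{L_k(E)}V_{([\alpha],k)}\cong k$ and $\mathrm{Hom}_{L_k(E)}(V_{([\alpha],k)},V_{([\beta],k)})=\{0\}$. (b) If $\alpha,\beta\in\partial E$ and there exists a nonzero bounded linear map $T:\mathcal{H}_{[\alpha]}\to\mathcal{H}_{[\beta]}$ such that $T\circ\pi_{[\alpha]}(a)=\pi_{[\beta]}(a)\circ T$ for all $a\in C^*(E)$, then $[\alpha]=[\beta]$ and $T=z\,\mathrm{Id}_{\mathcal{H}_{[\alpha]}}$ for some $z\in\mathbb{C}$. Consequently, for any $\alpha,\beta\in\partial E$ with $[\alpha]\neq[\beta]$ we have $\mathrm{End}_{C^*(E)}\mathcal{H}_{[\alpha]}\cong\mathbb{C}$, $\mathrm{Unitary}_{C^*(E)}\mathcal{H}_{[\alpha]}\cong\mathbb{T}$, and $\mathrm{Hom}_{C^*(E)}(\mathcal{H}_{[\alpha]},\mathcal{H}_{[\beta]})=\{0\}$.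
   Context: A graph $E=(E^0,E^1,r,s)$ has vertex set $E^0$, edge set $E^1$, range and source maps; no countability assumed. A vertex is singular if it emits no edges or infinitely many edges, regular otherwise. Finite paths include vertices (length $0$) and sequences $e_1\cdots e_n$ with $r(e_i)=s(e_{i+1})$; infinite paths are sequences $e_1e_2\cdots$. Boundary paths $\partial E$: infinite paths together with finite paths whose range is singular. The shift $\sigma_E$ removes the first edge (fixes vertices; sends a single edge $e$ to $r(e)$); $\alpha,\beta\in\partial E$ are shift-tail equivalent if $\sigma_E^m(\alpha)=\sigma_E^n(\beta)$ for some $m,n\in\mathbb{N}$; $[\alpha]$ is the class. $L_k(E)$: universal $k$-algebra generated by pairwise orthogonal idempotents $p_v$ and elements $s_e,s_e^*$ with $p_{s(e)}s_e=s_e=s_ep_{r(e)}$, $p_{r(e)}s_e^*=s_e^*=s_e^*p_{s(e)}$, $s_e^*s_f=\delta_{e,f}p_{r(e)}$, $p_v=\sum_{s(e)=v}s_es_e^*$ for regular $v$. $C^*(E)$: universal $C^*$-algebra generated by mutually orthogonal projections $p_v$ and partial isometries $s_e$ with mutually orthogonal ranges, $s_e^*s_e=p_{r(e)}$, $s_es_e^*\le p_{s(e)}$, $p_v=\sum_{s(e)=v}s_es_e^*$ for regular $v$. $V_{(\partial E,k)}$ is the $k$-vector space with basis $\partial E$, $\mathcal{H}_{\partial E}=\ell^2(\partial E)$. $\rho_{E,k}$ and $\pi_E$ are the representations on these spaces given on $\alpha\in\partial E$ by: $p_v\alpha=\alpha$ if $s(\alpha)=v$, else $0$; $s_e\alpha=e\alpha$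 if $s(\alpha)=r(e)$, else $0$; $s_e^*\alpha=\alpha'$ if $\alpha=e\alpha'$, else $0$. $V_{([\alpha],k)}=\mathrm{span}_k[\alpha]$ and $\mathcal{H}_{[\alpha]}=\ell^2([\alpha])$ are invariant subspaces; $\rho_{([\alpha],k)}$ and $\pi_{[\alpha]}$ are the restrictions to them. $\mathrm{End}_{A}$, $\mathrm{Hom}_{A}$ denote (bounded, in the Hilbert case) linear maps intertwining the representations, and $\mathrm{Unitary}_{C^*(E)}\mathcal{H}_{[\alpha]}$ the group of intertwining unitaries; $\mathbb{T}=\{z\in\mathbb{C}:|z|=1\}$. *)

theory Defs
  imports "HOL-Analysis.Analysis"
begin

text \<open>A graph E = (V0, E1, r, s): vertex set V0, edge set E1 (arbitrary sets, no
countability), range and source maps r, s.  Paths of E are represented by the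
datatype below: FinP v es is the finite path with edge list es starting at v
(es = [] gives the vertex v, a path of length 0); InfP f is the infinite path
f 0, f 1, f 2, ...\<close>

datatype ('v,'e) gpath = FinP 'v "'e list" | InfP "nat \<Rightarrow> 'e"

definition regular_vertex :: "'e set \<Rightarrow> ('e \<Rightarrow> 'v) \<Rightarrow> 'v \<Rightarrow> bool" where
  "regular_vertex E1 s v \<longleftrightarrow> finite {e\<in>E1. s e = v} \<and> {e\<in>E1. s e = v} \<noteq> {}"

definition singular_vertex :: "'e set \<Rightarrow> ('e \<Rightarrow> 'v) \<Rightarrow> 'v \<Rightarrow> bool" where
  "singular_vertex E1 s v \<longleftrightarrow> \<not> regular_vertex E1 s v"

fun p_src :: "('e \<Rightarrow> 'v) \<Rightarrow> ('v,'e) gpath \<Rightarrow> 'v" where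
  "p_src s (FinP v es) = v"
| "p_src s (InfP f) = s (f 0)"

fun p_rng :: "('e \<Rightarrow> 'v) \<Rightarrow> ('v,'e) gpath \<Rightarrow> 'v" where
  "p_rng r (FinP v es) = (if es = [] then v else r (last es))"

definition fin_path :: "'v set \<Rightarrow> 'e set \<Rightarrow> ('e \<Rightarrow> 'v) \<Rightarrow> ('e \<Rightarrow> 'v) \<Rightarrow> 'v \<Rightarrow> 'e list \<Rightarrow> bool" where
  "fin_path V0 E1 r s v es \<longleftrightarrow> v \<in> V0 \<and> set es \<subseteq> E1 \<and> (es \<noteq> [] \<longrightarrow> s (hd es) = v)
     \<and> (\<forall>i. Suc i < length es \<longrightarrow> r (es ! i) = s (es ! Suc i))"

definition inf_path :: "'e set \<Rightarrow> ('e \<Rightarrow> 'v) \<Rightarrow> ('e \<Rightarrow> 'v) \<Rightarrow> (nat \<Rightarrow> 'e) \<Rightarrow> bool" where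
  "inf_path E1 r s f \<longleftrightarrow> (\<forall>i. f i \<in> E1 \<and> r (f i) = s (f (Suc i)))"

definition boundary_paths :: "'v set \<Rightarrow> 'e set \<Rightarrow> ('e \<Rightarrow> 'v) \<Rightarrow> ('e \<Rightarrow> 'v) \<Rightarrow> ('v,'e) gpath set" where
  "boundary_paths V0 E1 r s =
     {InfP f | f. inf_path E1 r s f}
     \<union> {FinP v es | v es. fin_path V0 E1 r s v es \<and> singular_vertex E1 s (p_rng r (FinP v es))}"

fun shift :: "('e \<Rightarrow> 'v) \<Rightarrow> ('v,'e) gpath \<Rightarrow> ('v,'e) gpath" where
  "shift r (FinP v []) = FinP v []"
| "shift r (FinP v (e # es)) = FinP (r e) es"
| "shift r (InfP f) = InfP (\<lambda>i. f (Suc i))"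

definition tail_equiv :: "('e \<Rightarrow> 'v) \<Rightarrow> ('v,'e) gpath \<Rightarrow> ('v,'e) gpath \<Rightarrow> bool" where
  "tail_equiv r \<alpha> \<beta> \<longleftrightarrow> (\<exists>m n. (shift r ^^ m) \<alpha> = (shift r ^^ n) \<beta>)"

definition tail_class :: "'v set \<Rightarrow> 'e set \<Rightarrow> ('e \<Rightarrow> 'v) \<Rightarrow> ('e \<Rightarrow> 'v) \<Rightarrow> ('v,'e) gpath \<Rightarrow> ('v,'e) gpath set" where
  "tail_class V0 E1 r s \<alpha> = {\<beta> \<in> boundary_paths V0 E1 r s. tail_equiv r \<alpha> \<beta>}"

fun prepend :: "('e \<Rightarrow> 'v) \<Rightarrow> 'e \<Rightarrow> ('v,'e) gpath \<Rightarrow> ('v,'e) gpath" where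
  "prepend s e (FinP v es) = FinP (s e) (e # es)"
| "prepend s e (InfP f) = InfP (case_nat e f)"

fun strip :: "('e \<Rightarrow> 'v) \<Rightarrow> 'e \<Rightarrow> ('v,'e) gpath \<Rightarrow> ('v,'e) gpath option" where
  "strip r e (FinP v []) = None"
| "strip r e (FinP v (e' # es)) = (if e' = e then Some (FinP (r e) es) else None)"
| "strip r e (InfP f) = (if f 0 = e then Some (InfP (\<lambda>i. f (Suc i))) else None)"

text \<open>The operators rho(p_v), rho(s_e), rho(s_e^*) (resp. pi(...)), written on
coefficient functions x : paths \<Rightarrow> scalars (x = sum of x(alpha) alpha).
They are the linear extensions of the action on the basis given in the paper.\<close>
definition op_p :: "('e \<Rightarrow> 'v) \<Rightarrow> 'v \<Rightarrow> (('v,'e) gpath \<Rightarrow> 'a::zero) \<Rightarrow> (('v,'e) gpath \<Rightarrow> 'a)" where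
  "op_p s v x = (\<lambda>\<beta>. if p_src s \<beta> = v then x \<beta> else 0)"

definition op_s :: "('e \<Rightarrow> 'v) \<Rightarrow> ('e \<Rightarrow> 'v) \<Rightarrow> 'e \<Rightarrow> (('v,'e) gpath \<Rightarrow> 'a::zero) \<Rightarrow> (('v,'e) gpath \<Rightarrow> 'a)" where
  "op_s r s e x = (\<lambda>\<beta>. case strip r e \<beta> of
       Some \<gamma> \<Rightarrow> (if \<beta> = prepend s e \<gamma> \<and> p_src s \<gamma> = r e then x \<gamma> else 0)
     | None \<Rightarrow> 0)"

definition op_sstar :: "('e \<Rightarrow> 'v) \<Rightarrow> ('e \<Rightarrow> 'v) \<Rightarrow> 'e \<Rightarrow> (('v,'e) gpath \<Rightarrow> 'a::zero) \<Rightarrow> (('v,'e) gpath \<Rightarrow> 'a)" where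
  "op_sstar r s e x = (\<lambda>\<gamma>. if p_src s \<gamma> = r e then x (prepend s e \<gamma>) else 0)"

text \<open>The image rho_{E,k}(L_k(E)) (resp. pi_E of the dense *-subalgebra of C*(E)):
the (non-unital) algebra generated by the generator operators.  Since the
generating set is closed under adjoints, this is also the generated *-algebra.\<close>
inductive_set gen_alg :: "'v set \<Rightarrow> 'e set \<Rightarrow> ('e \<Rightarrow> 'v) \<Rightarrow> ('e \<Rightarrow> 'v)
    \<Rightarrow> ((('v,'e) gpath \<Rightarrow> 'a::field) \<Rightarrow> (('v,'e) gpath \<Rightarrow> 'a)) set"
  for V0 E1 r s where
  gen_p: "v \<in> V0 \<Longrightarrow> op_p s v \<in> gen_alg V0 E1 r s"
| gen_s: "e \<in> E1 \<Longrightarrow> op_s r s e \<in> gen_alg V0 E1 r s"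
| gen_sstar: "e \<in> E1 \<Longrightarrow> op_sstar r s e \<in> gen_alg V0 E1 r s"
| gen_add: "a \<in> gen_alg V0 E1 r s \<Longrightarrow> b \<in> gen_alg V0 E1 r s \<Longrightarrow> (\<lambda>x p. a x p + b x p) \<in> gen_alg V0 E1 r s"
| gen_smult: "a \<in> gen_alg V0 E1 r s \<Longrightarrow> (\<lambda>x p. c * a x p) \<in> gen_alg V0 E1 r s"
| gen_comp: "a \<in> gen_alg V0 E1 r s \<Longrightarrow> b \<in> gen_alg V0 E1 r s \<Longrightarrow> a \<circ> b \<in> gen_alg V0 E1 r s"

definition span_space :: "'v set \<Rightarrow> 'e set \<Rightarrow> ('e \<Rightarrow> 'v) \<Rightarrow> ('e \<Rightarrow> 'v) \<Rightarrow> ('v,'e) gpath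
    \<Rightarrow> (('v,'e) gpath \<Rightarrow> 'a::zero) set" where
  "span_space V0 E1 r s \<alpha> = {x. finite {p. x p \<noteq> 0} \<and> {p. x p \<noteq> 0} \<subseteq> tail_class V0 E1 r s \<alpha>}"

definition l2_space :: "('v,'e) gpath set \<Rightarrow> (('v,'e) gpath \<Rightarrow> complex) set" where
  "l2_space A = {x. {p. x p \<noteq> 0} \<subseteq> A \<and> (\<lambda>p. (cmod (x p))\<^sup>2) summable_on UNIV}"

definition l2norm :: "('p \<Rightarrow> complex) \<Rightarrow> real" where
  "l2norm x = sqrt (infsum (\<lambda>p. (cmod (x p))\<^sup>2) UNIV)"

definition lin_map_on :: "('p \<Rightarrow> 'a::field) set \<Rightarrow> ('p \<Rightarrow> 'a) set \<Rightarrow> (('p \<Rightarrow> 'a) \<Rightarrow> ('p \<Rightarrow> 'a)) \<Rightarrow> bool" where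
  "lin_map_on A B T \<longleftrightarrow> (\<forall>x\<in>A. T x \<in> B)
     \<and> (\<forall>x\<in>A. \<forall>y\<in>A. T (\<lambda>p. x p + y p) = (\<lambda>p. T x p + T y p))
     \<and> (\<forall>c. \<forall>x\<in>A. T (\<lambda>p. c * x p) = (\<lambda>p. c * T x p))"

definition bounded_on :: "('p \<Rightarrow> complex) set \<Rightarrow> (('p \<Rightarrow> complex) \<Rightarrow> ('p \<Rightarrow> complex)) \<Rightarrow> bool" where
  "bounded_on A T \<longleftrightarrow> (\<exists>C. \<forall>x\<in>A. l2norm (T x) \<le> C * l2norm x)"

text \<open>pi_E(C*(E)): the operator-norm closure of pi_E of the generated *-algebra,
as bounded operators on ell^2(boundary paths).\<close>
definition cstar_image :: "'v set \<Rightarrow> 'e set \<Rightarrow> ('e \<Rightarrow> 'v) \<Rightarrow> ('e \<Rightarrow> 'v)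
    \<Rightarrow> ((('v,'e) gpath \<Rightarrow> complex) \<Rightarrow> (('v,'e) gpath \<Rightarrow> complex)) set" where
  "cstar_image V0 E1 r s =
     {a. lin_map_on (l2_space (boundary_paths V0 E1 r s)) (l2_space (boundary_paths V0 E1 r s)) a
       \<and> bounded_on (l2_space (boundary_paths V0 E1 r s)) a
       \<and> (\<forall>\<epsilon>>0. \<exists>b\<in>gen_alg V0 E1 r s. \<forall>x\<in>l2_space (boundary_paths V0 E1 r s).
             l2norm (\<lambda>p. a x p - b x p) \<le> \<epsilon> * l2norm x)}"

definition alg_Hom :: "'v set \<Rightarrow> 'e set \<Rightarrow> ('e \<Rightarrow> 'v) \<Rightarrow> ('e \<Rightarrow> 'v) \<Rightarrow> ('v,'e) gpath \<Rightarrow> ('v,'e) gpath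
    \<Rightarrow> ((('v,'e) gpath \<Rightarrow> 'a::field) \<Rightarrow> (('v,'e) gpath \<Rightarrow> 'a)) set" where
  "alg_Hom V0 E1 r s \<alpha> \<beta> = {T. lin_map_on (span_space V0 E1 r s \<alpha>) (span_space V0 E1 r s \<beta>) T
      \<and> (\<forall>a\<in>gen_alg V0 E1 r s. \<forall>x\<in>span_space V0 E1 r s \<alpha>. T (a x) = a (T x))
      \<and> T \<in> extensional (span_space V0 E1 r s \<alpha>)}"

definition cstar_Hom :: "'v set \<Rightarrow> 'e set \<Rightarrow> ('e \<Rightarrow> 'v) \<Rightarrow> ('e \<Rightarrow> 'v) \<Rightarrow> ('v,'e) gpath \<Rightarrow> ('v,'e) gpath
    \<Rightarrow> ((('v,'e) gpath \<Rightarrow> complex) \<Rightarrow> (('v,'e) gpath \<Rightarrow> complex)) set" where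
  "cstar_Hom V0 E1 r s \<alpha> \<beta> = {T. lin_map_on (l2_space (tail_class V0 E1 r s \<alpha>)) (l2_space (tail_class V0 E1 r s \<beta>)) T
      \<and> bounded_on (l2_space (tail_class V0 E1 r s \<alpha>)) T
      \<and> (\<forall>a\<in>cstar_image V0 E1 r s. \<forall>x\<in>l2_space (tail_class V0 E1 r s \<alpha>). T (a x) = a (T x))
      \<and> T \<in> extensional (l2_space (tail_class V0 E1 r s \<alpha>))}"

definition cstar_Unitary :: "'v set \<Rightarrow> 'e set \<Rightarrow> ('e \<Rightarrow> 'v) \<Rightarrow> ('e \<Rightarrow> 'v) \<Rightarrow> ('v,'e) gpath
    \<Rightarrow> ((('v,'e) gpath \<Rightarrow> complex) \<Rightarrow> (('v,'e) gpath \<Rightarrow> complex)) set" where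
  "cstar_Unitary V0 E1 r s \<alpha> = {T \<in> cstar_Hom V0 E1 r s \<alpha> \<alpha>.
      T ` l2_space (tail_class V0 E1 r s \<alpha>) = l2_space (tail_class V0 E1 r s \<alpha>)
      \<and> (\<forall>x\<in>l2_space (tail_class V0 E1 r s \<alpha>). l2norm (T x) = l2norm x)}"

end

theory Submission
  imports Defs
begin

text \<open>Write delta p for the basis vector of a boundary path p. An intertwiner T maps
  delta p to a multiple of delta p: the projections p_v and s_e s_e^* separate paths with
  different sources or different first edges, and the relation
  T (delta (e p)) = s_e (T (delta p)), for e p the path p with the edge e prepended, moves a
  difference further along two paths back to their start. The same relation shows that the
  diagonal coefficient of T at p is invariant under the shift, hence constant on the tail class
  of alpha. So T is a scalar z on finitely supported vectors, and, being bounded, on all of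
  ell^2 of the class. If z is nonzero, then z delta alpha lies in the target space, which
  forces alpha to be tail equivalent to beta.\<close>

section \<open>Paths and the generating operators\<close>

definition delta :: "'p \<Rightarrow> 'p \<Rightarrow> 'a::{zero,one}" where
  "delta p = (\<lambda>q. if q = p then 1 else 0)"

fun edge_at :: "('v,'e) gpath \<Rightarrow> nat \<Rightarrow> 'e option" where
  "edge_at (FinP v es) i = (if i < length es then Some (es ! i) else None)"
| "edge_at (InfP f) i = Some (f i)"

lemma edge_at_shift: "edge_at (shift r p) i = edge_at p (Suc i)"
  by (cases "(r, p)" rule: shift.cases) auto

lemma edge_at_0_None: "edge_at p 0 = None \<Longrightarrow> edge_at p i = None"
  by (cases p) (auto split: if_splits)

lemma shift_eq_self: "edge_at p 0 = None \<Longrightarrow> shift r p = p"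
  by (cases "(r, p)" rule: shift.cases) auto

lemma gpath_eqI:
  assumes src: "p_src s p = p_src s q" and edges: "\<And>i. edge_at p i = edge_at q i"
  shows "p = q"
proof (cases p)
  case (FinP v es)
  then obtain fs where q: "q = FinP v fs"
    using src edges[of "length es"] by (cases q) auto
  have "length es = length fs"
    using edges[of "length es"] edges[of "length fs"] FinP q
    by (auto split: if_splits)
  moreover have "es ! i = fs ! i" if "i < length es" for i
    using edges[of i] that calculation FinP q by simp
  ultimately show ?thesis
    using FinP q by (simp add: nth_equalityI)
next
  case (InfP f)
  then obtain g where "q = InfP g"
    using edges by (cases q) (metis edge_at.simps less_irrefl option.distinct(1))
  then show ?thesis
    using InfP edges by auto
qed

lemma tail_equiv_refl: "tail_equiv r p p"
  unfolding tail_equiv_def by blast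

lemma tail_equiv_sym: "tail_equiv r p q \<Longrightarrow> tail_equiv r q p"
  unfolding tail_equiv_def by metis

lemma tail_equiv_trans:
  assumes "tail_equiv r p q" "tail_equiv r q u"
  shows "tail_equiv r p u"
proof -
  obtain a b where ab: "(shift r ^^ a) p = (shift r ^^ b) q"
    using assms(1) unfolding tail_equiv_def by blast
  obtain c d where cd: "(shift r ^^ c) q = (shift r ^^ d) u"
    using assms(2) unfolding tail_equiv_def by blast
  have "(shift r ^^ (c + a)) p = (shift r ^^ c) ((shift r ^^ b) q)"
    by (simp add: funpow_add ab)
  also have "\<dots> = (shift r ^^ b) ((shift r ^^ c) q)"
    by (metis add.commute comp_apply funpow_add)
  also have "\<dots> = (shift r ^^ (b + d)) u"
    by (simp add: funpow_add cd)
  finally show ?thesis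
    unfolding tail_equiv_def by blast
qed

lemma tail_equiv_shift: "tail_equiv r p (shift r p)"
  unfolding tail_equiv_def by (rule exI[of _ 1], rule exI[of _ 0]) simp

lemma strip_SomeD: "strip r e \<beta> = Some \<gamma> \<Longrightarrow> \<gamma> = shift r \<beta> \<and> edge_at \<beta> 0 = Some e"
  by (cases "(r, e, \<beta>)" rule: strip.cases) (auto split: if_splits)

lemma shift_prepend: "p_src s \<gamma> = r e \<Longrightarrow> shift r (prepend s e \<gamma>) = \<gamma>"
  by (cases \<gamma>) auto

definition cylinder :: "('e \<Rightarrow> 'v) \<Rightarrow> ('e \<Rightarrow> 'v) \<Rightarrow> 'e \<Rightarrow> ('v,'e) gpath set" where
  "cylinder r s e = {\<beta>. \<exists>\<gamma>. strip r e \<beta> = Some \<gamma> \<and> \<beta> = prepend s e \<gamma> \<and> p_src s \<gamma> = r e}"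

lemma cylinderD:
  assumes "\<beta> \<in> cylinder r s e"
  shows "edge_at \<beta> 0 = Some e" and "prepend s e (shift r \<beta>) = \<beta>" and "p_src s (shift r \<beta>) = r e"
  using assms strip_SomeD unfolding cylinder_def by fastforce+

lemma op_s_eq: "op_s r s e x = (\<lambda>\<beta>. if \<beta> \<in> cylinder r s e then x (shift r \<beta>) else 0)"
  by (auto simp: op_s_def cylinder_def fun_eq_iff split: option.split dest: strip_SomeD)

lemma op_sstar_eq: "op_sstar r s e x = (\<lambda>\<gamma>. if \<gamma> \<in> {\<gamma>. p_src s \<gamma> = r e} then x (prepend s e \<gamma>) else 0)"
  unfolding op_sstar_def by simp

lemma op_p_eq: "op_p s v x = (\<lambda>\<beta>. if \<beta> \<in> {\<beta>. p_src s \<beta> = v} then x (id \<beta>) else 0)"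
  by (simp add: op_p_def fun_eq_iff)

lemma op_s_op_sstar_eq:
  "(op_s r s e \<circ> op_sstar r s e) x = (\<lambda>\<beta>. if \<beta> \<in> cylinder r s e then x (id \<beta>) else 0)"
  by (auto simp: op_s_eq op_sstar_def fun_eq_iff cylinderD)

lemma inj_on_shift_cylinder: "inj_on (shift r) (cylinder r s e)"
proof (rule inj_onI)
  fix x y assume x: "x \<in> cylinder r s e" and y: "y \<in> cylinder r s e"
    and eq: "shift r x = shift r y"
  have "x = prepend s e (shift r x)"
    using cylinderD(2)[OF x] by simp
  also have "\<dots> = y"
    using cylinderD(2)[OF y] eq by simp
  finally show "x = y" .
qed

lemma inj_on_prepend: "inj_on (prepend s e) {\<gamma>. p_src s \<gamma> = r e}"
proof (rule inj_onI)
  fix x y assume x: "x \<in> {\<gamma>. p_src s \<gamma> = r e}" and y: "y \<in> {\<gamma>. p_src s \<gamma> = r e}"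
    and eq: "prepend s e x = prepend s e y"
  have "x = shift r (prepend s e x)"
    using shift_prepend[of s x r e] x by simp
  also have "\<dots> = y"
    using shift_prepend[of s y r e] y eq by simp
  finally show "x = y" .
qed

lemma op_s_delta:
  assumes "p \<in> cylinder r s e"
  shows "op_s r s e (delta (shift r p)) = delta p"
proof -
  have "shift r q = shift r p \<longleftrightarrow> q = p" if "q \<in> cylinder r s e" for q
    using inj_on_shift_cylinder[THEN inj_onD] that assms by metis
  then show ?thesis
    using assms by (auto simp: op_s_eq delta_def fun_eq_iff)
qed

definition reindexing :: "(('p \<Rightarrow> 'a::zero) \<Rightarrow> ('p \<Rightarrow> 'a)) \<Rightarrow> bool" where
  "reindexing a \<longleftrightarrow> (\<exists>S g. inj_on g S \<and> (\<forall>x. a x = (\<lambda>\<beta>. if \<beta> \<in> S then x (g \<beta>) else 0)))"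

lemma reindexingI: "inj_on g S \<Longrightarrow> (\<And>x. a x = (\<lambda>\<beta>. if \<beta> \<in> S then x (g \<beta>) else 0)) \<Longrightarrow> reindexing a"
  unfolding reindexing_def by blast

lemma reindexing_op_p: "reindexing (op_p s v)"
  by (rule reindexingI[OF inj_on_id op_p_eq])

lemma reindexing_op_s: "reindexing (op_s r s e)"
  by (rule reindexingI[OF inj_on_shift_cylinder op_s_eq])

lemma reindexing_op_sstar: "reindexing (op_sstar r s e)"
  by (rule reindexingI[OF inj_on_prepend op_sstar_eq])

lemma reindexing_op_s_op_sstar: "reindexing (op_s r s e \<circ> op_sstar r s e)"
  by (rule reindexingI[OF inj_on_id op_s_op_sstar_eq])

lemma reindexing_linear:
  fixes a :: "('p \<Rightarrow> 'a::semiring_0) \<Rightarrow> ('p \<Rightarrow> 'a)"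
  assumes "reindexing a"
  shows "a (\<lambda>p. c * x p) = (\<lambda>p. c * a x p)" and "a (\<lambda>p. x p + y p) = (\<lambda>p. a x p + a y p)"
  using assms unfolding reindexing_def by auto

lemma reindexing_finite_support:
  assumes "reindexing a" "finite {p. x p \<noteq> 0}"
  shows "finite {p. a x p \<noteq> 0}"
proof -
  obtain S g where g: "inj_on g S" and a: "\<And>x. a x = (\<lambda>\<beta>. if \<beta> \<in> S then x (g \<beta>) else 0)"
    using assms(1) unfolding reindexing_def by blast
  have "{p. a x p \<noteq> 0} \<subseteq> g -` {p. x p \<noteq> 0} \<inter> S"
    by (auto simp: a)
  then show ?thesis
    using finite_vimage_IntI[OF assms(2) g] finite_subset by blast
qed

lemma gen_alg_linear:
  assumes "a \<in> gen_alg V0 E1 r s"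
  shows "a (\<lambda>p. c * x p) = (\<lambda>p. c * a x p) \<and> a (\<lambda>p. x p + y p) = (\<lambda>p. a x p + a y p)"
  using assms
proof (induction arbitrary: x y c)
  case (gen_comp a b)
  then show ?case
    by (metis comp_apply)
qed (auto simp: reindexing_linear reindexing_op_p reindexing_op_s reindexing_op_sstar
      fun_eq_iff algebra_simps)

lemma gen_alg_finite_support:
  assumes "a \<in> gen_alg V0 E1 r s" "finite {p. x p \<noteq> 0}"
  shows "finite {p. a x p \<noteq> 0}"
  using assms
proof (induction arbitrary: x)
  case (gen_add a b)
  have "{p. a x p + b x p \<noteq> 0} \<subseteq> {p. a x p \<noteq> 0} \<union> {p. b x p \<noteq> 0}"
    by auto
  then show ?case
    using gen_add finite_subset by (metis (no_types, lifting) finite_Un)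
next
  case (gen_smult a c)
  have "{p. c * a x p \<noteq> 0} \<subseteq> {p. a x p \<noteq> 0}"
    by auto
  then show ?case
    using gen_smult finite_subset by blast
qed (auto intro: reindexing_finite_support reindexing_op_p reindexing_op_s reindexing_op_sstar)

section \<open>Boundary paths and tail classes\<close>

locale graph =
  fixes V0 :: "'v set" and E1 :: "'e set" and r s :: "'e \<Rightarrow> 'v"
  assumes range_in: "r ` E1 \<subseteq> V0" and source_in: "s ` E1 \<subseteq> V0"
begin

abbreviation "bpaths \<equiv> boundary_paths V0 E1 r s"
abbreviation "cls \<equiv> tail_class V0 E1 r s"

lemma bpaths_src: "p \<in> bpaths \<Longrightarrow> p_src s p \<in> V0"
  using source_in unfolding boundary_paths_def fin_path_def inf_path_def by auto

lemma bpaths_first_edge: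
  assumes "p \<in> bpaths" "edge_at p 0 = Some e"
  shows "e \<in> E1" and "p \<in> cylinder r s e"
proof -
  have "e \<in> E1 \<and> strip r e p = Some (shift r p) \<and> p = prepend s e (shift r p) \<and> p_src s (shift r p) = r e"
  proof (cases p)
    case (FinP v es)
    then obtain es' where "es = e # es'"
      using assms(2) by (cases es) (auto split: if_splits)
    then show ?thesis
      using assms(1) FinP unfolding boundary_paths_def fin_path_def by auto
  next
    case (InfP f)
    have "f = case_nat (f 0) (\<lambda>i. f (Suc i))"
      by (auto simp: fun_eq_iff split: nat.splits)
    then show ?thesis
      using assms InfP unfolding boundary_paths_def inf_path_def by auto
  qed
  then show "e \<in> E1" and "p \<in> cylinder r s e"
    unfolding cylinder_def by blast+
qed

lemma bpaths_shift:
  assumes "p \<in> bpaths"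
  shows "shift r p \<in> bpaths"
proof (cases p)
  case (FinP v es)
  have fp: "fin_path V0 E1 r s v es" and sg: "singular_vertex E1 s (p_rng r p)"
    using assms FinP unfolding boundary_paths_def by auto
  show ?thesis
  proof (cases es)
    case (Cons e es')
    have "fin_path V0 E1 r s (r e) es'"
      unfolding fin_path_def
    proof (intro conjI allI impI)
      show "r e \<in> V0" "set es' \<subseteq> E1"
        using fp range_in Cons unfolding fin_path_def by auto
      show "s (hd es') = r e" if "es' \<noteq> []"
        using fp Cons that unfolding fin_path_def by (cases es') (auto dest!: spec[of _ 0])
      show "r (es' ! i) = s (es' ! Suc i)" if "Suc i < length es'" for i
        using fp Cons that unfolding fin_path_def by (auto dest!: spec[of _ "Suc i"])
    qed
    moreover have "p_rng r (FinP (r e) es') = p_rng r p"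
      using FinP Cons by auto
    ultimately show ?thesis
      using FinP Cons sg unfolding boundary_paths_def by auto
  qed (use assms FinP in simp)
next
  case (InfP f)
  then show ?thesis
    using assms unfolding boundary_paths_def inf_path_def by auto
qed

lemma bpaths_prepend:
  assumes "\<gamma> \<in> bpaths" "e \<in> E1" "p_src s \<gamma> = r e"
  shows "prepend s e \<gamma> \<in> bpaths"
proof (cases \<gamma>)
  case (FinP v es)
  have fp: "fin_path V0 E1 r s v es" and sg: "singular_vertex E1 s (p_rng r \<gamma>)"
    using assms FinP unfolding boundary_paths_def by auto
  have "fin_path V0 E1 r s (s e) (e # es)"
    using fp assms FinP source_in unfolding fin_path_def
    by (auto simp: nth_Cons' hd_conv_nth)
  moreover have "p_rng r (FinP (s e) (e # es)) = p_rng r \<gamma>"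
    using assms FinP by auto
  ultimately show ?thesis
    using FinP sg unfolding boundary_paths_def by auto
next
  case (InfP f)
  have "inf_path E1 r s (case_nat e f)"
    using assms InfP unfolding boundary_paths_def inf_path_def by (auto split: nat.splits)
  then show ?thesis
    using InfP unfolding boundary_paths_def by auto
qed

lemma cls_subset: "cls \<alpha> \<subseteq> bpaths"
  unfolding tail_class_def by auto

lemma cls_self: "\<alpha> \<in> bpaths \<Longrightarrow> \<alpha> \<in> cls \<alpha>"
  unfolding tail_class_def using tail_equiv_refl by auto

lemma cls_shift: "p \<in> cls \<alpha> \<Longrightarrow> shift r p \<in> cls \<alpha>"
  unfolding tail_class_def using bpaths_shift tail_equiv_shift tail_equiv_trans by blast

lemma cls_funpow_shift: "p \<in> cls \<alpha> \<Longrightarrow> (shift r ^^ n) p \<in> cls \<alpha>"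
  by (induction n) (auto intro: cls_shift)

lemma cls_prepend: "\<gamma> \<in> cls \<alpha> \<Longrightarrow> e \<in> E1 \<Longrightarrow> p_src s \<gamma> = r e \<Longrightarrow> prepend s e \<gamma> \<in> cls \<alpha>"
  unfolding tail_class_def
  by (metis (no_types, lifting) mem_Collect_eq bpaths_prepend shift_prepend tail_equiv_shift
      tail_equiv_sym tail_equiv_trans)

lemma cls_eq: "\<alpha> \<in> cls \<beta> \<Longrightarrow> cls \<alpha> = cls \<beta>"
  unfolding tail_class_def using tail_equiv_trans tail_equiv_sym by blast

definition tail_saturated :: "('v,'e) gpath set \<Rightarrow> bool" where
  "tail_saturated C \<longleftrightarrow> (\<forall>p\<in>C. shift r p \<in> C)
     \<and> (\<forall>\<gamma>\<in>C. \<forall>e\<in>E1. p_src s \<gamma> = r e \<longrightarrow> prepend s e \<gamma> \<in> C)"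

lemma tail_saturated_bpaths: "tail_saturated bpaths"
  unfolding tail_saturated_def using bpaths_prepend bpaths_shift by blast

lemma tail_saturated_cls: "tail_saturated (cls \<alpha>)"
  unfolding tail_saturated_def using cls_prepend cls_shift by blast

lemma gen_alg_support:
  assumes "a \<in> gen_alg V0 E1 r s" "tail_saturated C" "{p. x p \<noteq> 0} \<subseteq> C"
  shows "{p. a x p \<noteq> 0} \<subseteq> C"
  using assms(1,3)
proof (induction arbitrary: x)
  case (gen_s e)
  show ?case
  proof
    fix \<beta> assume "\<beta> \<in> {p. op_s r s e x p \<noteq> 0}"
    then have \<beta>: "\<beta> \<in> cylinder r s e" and "shift r \<beta> \<in> C"
      using gen_s by (auto simp: op_s_eq split: if_splits)
    then have "prepend s e (shift r \<beta>) \<in> C"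
      using assms(2) gen_s cylinderD(3)[OF \<beta>] unfolding tail_saturated_def by blast
    then show "\<beta> \<in> C"
      using cylinderD(2)[OF \<beta>] by simp
  qed
next
  case (gen_sstar e)
  show ?case
  proof
    fix \<gamma> assume "\<gamma> \<in> {p. op_sstar r s e x p \<noteq> 0}"
    then have \<gamma>: "p_src s \<gamma> = r e" and "prepend s e \<gamma> \<in> C"
      using gen_sstar by (auto simp: op_sstar_def split: if_splits)
    then have "shift r (prepend s e \<gamma>) \<in> C"
      using assms(2) unfolding tail_saturated_def by blast
    then show "\<gamma> \<in> C"
      using shift_prepend[of s \<gamma> r e, OF \<gamma>] by simp
  qed
next
  case (gen_add a b)
  have "{p. a x p + b x p \<noteq> 0} \<subseteq> {p. a x p \<noteq> 0} \<union> {p. b x p \<noteq> 0}"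
    by auto
  then show ?case
    using gen_add by blast
qed (auto simp: op_p_def)

end

section \<open>Intertwiners are diagonal on basis vectors\<close>

locale generator_intertwiner = graph V0 E1 r s
  for V0 :: "'v set" and E1 :: "'e set" and r s :: "'e \<Rightarrow> 'v" +
  fixes \<alpha> :: "('v,'e) gpath"
    and D :: "(('v,'e) gpath \<Rightarrow> 'a::ring_1) set"
    and T :: "(('v,'e) gpath \<Rightarrow> 'a) \<Rightarrow> (('v,'e) gpath \<Rightarrow> 'a)"
  assumes \<alpha>_bpaths: "\<alpha> \<in> bpaths"
    and delta_in: "\<And>p. p \<in> cls \<alpha> \<Longrightarrow> delta p \<in> D"
    and T_zero: "T (\<lambda>p. 0) = (\<lambda>p. 0)"
    and T_bpaths: "\<And>x q. x \<in> D \<Longrightarrow> q \<notin> bpaths \<Longrightarrow> T x q = 0"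
    and T_op_p: "\<And>v x. v \<in> V0 \<Longrightarrow> x \<in> D \<Longrightarrow> T (op_p s v x) = op_p s v (T x)"
    and T_op_s: "\<And>e x. e \<in> E1 \<Longrightarrow> x \<in> D \<Longrightarrow> T (op_s r s e x) = op_s r s e (T x)"
    and T_op_s_op_sstar: "\<And>e x. e \<in> E1 \<Longrightarrow> x \<in> D \<Longrightarrow>
      T ((op_s r s e \<circ> op_sstar r s e) x) = (op_s r s e \<circ> op_sstar r s e) (T x)"
begin

lemma coeff_eq_0_if_src_ne:
  assumes p: "p \<in> cls \<alpha>" and ne: "p_src s p \<noteq> p_src s q"
  shows "T (delta p) q = 0"
proof -
  have "op_p s (p_src s p) (delta p) = delta p"
    by (auto simp: op_p_def delta_def)
  moreover have "p_src s p \<in> V0"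
    using bpaths_src p cls_subset by blast
  ultimately have "T (delta p) q = op_p s (p_src s p) (T (delta p)) q"
    using T_op_p delta_in[OF p] by metis
  then show ?thesis
    using ne by (simp add: op_p_def)
qed

lemma coeff_eq_0_if_first_edge_ne:
  assumes p: "p \<in> cls \<alpha>" and q: "q \<in> bpaths" and ne: "edge_at p 0 \<noteq> edge_at q 0"
  shows "T (delta p) q = 0"
proof (cases "edge_at p 0")
  case (Some e)
  have pb: "p \<in> bpaths"
    using p cls_subset by blast
  have "(op_s r s e \<circ> op_sstar r s e) (delta p) = delta p"
    unfolding op_s_op_sstar_eq using bpaths_first_edge(2)[OF pb Some] by (auto simp: delta_def)
  then have "T (delta p) q = (op_s r s e \<circ> op_sstar r s e) (T (delta p)) q"
    using T_op_s_op_sstar[OF bpaths_first_edge(1)[OF pb Some] delta_in[OF p]] by metis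
  also have "\<dots> = 0"
    unfolding op_s_op_sstar_eq using ne Some cylinderD(1) by fastforce
  finally show ?thesis .
next
  case None
  then obtain e where q0: "edge_at q 0 = Some e"
    using ne by (cases "edge_at q 0") auto
  note e = bpaths_first_edge[OF q q0]
  have vanish: "(op_s r s e \<circ> op_sstar r s e) (delta p) = (\<lambda>p. 0)"
    unfolding op_s_op_sstar_eq using None cylinderD(1) by (fastforce simp: delta_def)
  have "(op_s r s e \<circ> op_sstar r s e) (T (delta p)) = T ((op_s r s e \<circ> op_sstar r s e) (delta p))"
    by (rule T_op_s_op_sstar[OF e(1) delta_in[OF p], symmetric])
  also have "\<dots> = (\<lambda>p. 0)"
    by (simp only: vanish T_zero)
  finally have "(op_s r s e \<circ> op_sstar r s e) (T (delta p)) = (\<lambda>p. 0)" .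
  then show ?thesis
    using fun_cong[of _ _ q] e(2) unfolding op_s_op_sstar_eq by fastforce
qed

lemma coeff_shift:
  assumes p: "p \<in> cls \<alpha>" and q: "q \<in> bpaths"
    and p0: "edge_at p 0 = Some e" and q0: "edge_at q 0 = Some e"
  shows "T (delta p) q = T (delta (shift r p)) (shift r q)"
proof -
  have pb: "p \<in> bpaths"
    using p cls_subset by blast
  have "T (delta p) = op_s r s e (T (delta (shift r p)))"
    using T_op_s[OF bpaths_first_edge(1)[OF pb p0] delta_in[OF cls_shift[OF p]]]
      op_s_delta[OF bpaths_first_edge(2)[OF pb p0]] by metis
  then show ?thesis
    using bpaths_first_edge(2)[OF q q0] by (simp add: op_s_eq)
qed

lemma coeff_eq_0_if_edge_ne:
  "p \<in> cls \<alpha> \<Longrightarrow> q \<in> bpaths \<Longrightarrow> edge_at p i \<noteq> edge_at q i \<Longrightarrow> T (delta p) q = 0"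
proof (induction i arbitrary: p q)
  case 0
  then show ?case
    by (rule coeff_eq_0_if_first_edge_ne)
next
  case (Suc i)
  show ?case
  proof (cases "edge_at p 0 = edge_at q 0")
    case True
    then obtain e where e: "edge_at p 0 = Some e" "edge_at q 0 = Some e"
      using Suc.prems(3) edge_at_0_None by (metis option.exhaust)
    have "T (delta p) q = T (delta (shift r p)) (shift r q)"
      by (rule coeff_shift[OF Suc.prems(1,2) e])
    also have "\<dots> = 0"
      by (rule Suc.IH[OF cls_shift[OF Suc.prems(1)] bpaths_shift[OF Suc.prems(2)]])
        (use Suc.prems(3) in \<open>simp add: edge_at_shift\<close>)
    finally show ?thesis .
  qed (use Suc.prems coeff_eq_0_if_first_edge_ne in blast)
qed

lemma coeff_eq_0_if_ne:
  assumes p: "p \<in> cls \<alpha>" and ne: "q \<noteq> p"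
  shows "T (delta p) q = 0"
proof (cases "q \<in> bpaths")
  case True
  have "p_src s p \<noteq> p_src s q \<or> (\<exists>i. edge_at p i \<noteq> edge_at q i)"
    using gpath_eqI[of s p q] ne by blast
  then show ?thesis
    using coeff_eq_0_if_src_ne[OF p] coeff_eq_0_if_edge_ne[OF p True] by blast
qed (use T_bpaths delta_in[OF p] in blast)

lemma coeff_diagonal_shift:
  assumes p: "p \<in> cls \<alpha>"
  shows "T (delta (shift r p)) (shift r p) = T (delta p) p"
proof (cases "edge_at p 0")
  case None
  then show ?thesis
    by (simp add: shift_eq_self)
next
  case (Some e)
  have "p \<in> bpaths"
    using p cls_subset by blast
  then show ?thesis
    using coeff_shift[OF p _ Some Some] by simp
qed

lemma coeff_diagonal_const:
  assumes p: "p \<in> cls \<alpha>"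
  shows "T (delta p) p = T (delta \<alpha>) \<alpha>"
proof -
  have funpow: "T (delta ((shift r ^^ n) q)) ((shift r ^^ n) q) = T (delta q) q"
    if "q \<in> cls \<alpha>" for q n
    using that by (induction n) (auto simp: coeff_diagonal_shift cls_funpow_shift)
  obtain m n where "(shift r ^^ m) \<alpha> = (shift r ^^ n) p"
    using p unfolding tail_class_def tail_equiv_def by blast
  then show ?thesis
    using funpow[OF p, of n] funpow[OF cls_self[OF \<alpha>_bpaths], of m] by simp
qed

lemma scalar_on_deltas: "p \<in> cls \<alpha> \<Longrightarrow> T (delta p) = (\<lambda>q. T (delta \<alpha>) \<alpha> * delta p q)"
  using coeff_eq_0_if_ne coeff_diagonal_const by (auto simp: delta_def fun_eq_iff)

end

section \<open>The algebraic representation\<close>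

abbreviation scalar_map :: "('p \<Rightarrow> 'a::times) set \<Rightarrow> 'a \<Rightarrow> ('p \<Rightarrow> 'a) \<Rightarrow> ('p \<Rightarrow> 'a)" where
  "scalar_map X z \<equiv> (\<lambda>x\<in>X. (\<lambda>p. z * x p))"

lemma lin_map_on_zero:
  fixes T :: "('p \<Rightarrow> 'a::field) \<Rightarrow> ('p \<Rightarrow> 'a)"
  assumes "lin_map_on A B T" "x \<in> A"
  shows "T (\<lambda>p. 0) = (\<lambda>p. 0)"
proof -
  have "T (\<lambda>p. 0 * x p) = (\<lambda>p. 0 * T x p)"
    using assms unfolding lin_map_on_def by blast
  then show ?thesis
    by simp
qed

lemma lin_map_on_eq_scalar_if_deltas:
  fixes T :: "('p \<Rightarrow> 'a::field) \<Rightarrow> ('p \<Rightarrow> 'a)"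
  assumes lin: "lin_map_on A B T"
    and finite_in: "\<And>x. finite {p. x p \<noteq> 0} \<Longrightarrow> {p. x p \<noteq> 0} \<subseteq> C \<Longrightarrow> x \<in> A"
    and deltas: "\<And>p. p \<in> C \<Longrightarrow> T (delta p) = (\<lambda>q. z * delta p q)"
    and x: "finite {p. x p \<noteq> 0}" "{p. x p \<noteq> 0} \<subseteq> C"
  shows "T x = (\<lambda>p. z * x p)"
proof -
  have "T x = (\<lambda>p. z * x p)" if "finite F" "{p. x p \<noteq> 0} \<subseteq> F" "F \<subseteq> C" for F x
    using that
  proof (induction F arbitrary: x rule: finite_induct)
    case empty
    then have "x = (\<lambda>p. 0)"
      by auto
    then show ?case
      using lin_map_on_zero[OF lin finite_in[of x]] empty by simp
  next
    case (insert a F)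
    define y where "y = (\<lambda>p. if p = a then 0 else x p)"
    have "{p. y p \<noteq> 0} \<subseteq> F"
      using insert.prems(1) by (auto simp: y_def)
    then have y: "y \<in> A"
      using finite_in[of y] insert.hyps(1) insert.prems(2) finite_subset by blast
    have Ty: "T y = (\<lambda>p. z * y p)"
      using insert.IH \<open>{p. y p \<noteq> 0} \<subseteq> F\<close> insert.prems(2) by blast
    have sub: "{p. x a * delta a p \<noteq> 0} \<subseteq> {a}" "{p. delta a p \<noteq> (0::'a)} \<subseteq> {a}"
      by (auto simp: delta_def split: if_splits)
    have a: "(\<lambda>p. x a * delta a p) \<in> A" "delta a \<in> A"
      by (rule finite_in[OF finite_subset[OF sub(1)]], use sub(1) insert.prems(2) in auto)
        (rule finite_in[OF finite_subset[OF sub(2)]], use sub(2) insert.prems(2) in auto)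
    have "x = (\<lambda>p. y p + x a * delta a p)"
      by (auto simp: y_def delta_def)
    then have "T x = (\<lambda>p. T y p + T (\<lambda>p. x a * delta a p) p)"
      using lin y a unfolding lin_map_on_def by metis
    also have "\<dots> = (\<lambda>p. z * y p + x a * (z * delta a p))"
      using lin a deltas[of a] insert.prems(2) Ty unfolding lin_map_on_def by auto
    also have "\<dots> = (\<lambda>p. z * x p)"
      by (auto simp: y_def delta_def fun_eq_iff)
    finally show ?case .
  qed
  then show ?thesis
    using x by blast
qed

lemma lin_map_on_scalar_map:
  fixes X :: "('p \<Rightarrow> 'a::field) set"
  assumes "\<And>x y. x \<in> X \<Longrightarrow> y \<in> X \<Longrightarrow> (\<lambda>p. x p + y p) \<in> X"
    and "\<And>c x. x \<in> X \<Longrightarrow> (\<lambda>p. c * x p) \<in> X"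
    and "\<And>x. x \<in> X \<Longrightarrow> (\<lambda>p. z * x p) \<in> Y"
  shows "lin_map_on X Y (scalar_map X z)"
  using assms unfolding lin_map_on_def by (auto simp: algebra_simps)

lemma bij_betw_scalar_map:
  fixes X :: "('p \<Rightarrow> 'a::field) set"
  assumes "w \<in> X" "w q \<noteq> 0"
    and "\<And>z. z \<in> Z \<Longrightarrow> scalar_map X z \<in> H"
    and "\<And>T. T \<in> H \<Longrightarrow> \<exists>z\<in>Z. T = scalar_map X z"
  shows "bij_betw (scalar_map X) Z H"
proof -
  have "inj_on (scalar_map X) Z"
  proof (rule inj_onI)
    fix z z' assume "scalar_map X z = scalar_map X z'"
    then have "z * w q = z' * w q"
      using assms(1) by (metis restrict_apply')
    then show "z = z'"
      using assms(2) by simp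
  qed
  then show ?thesis
    unfolding bij_betw_def using assms(3,4) by blast
qed

context graph
begin

abbreviation "Vspace \<equiv> span_space V0 E1 r s"

lemma Vspace_I: "finite {p. x p \<noteq> 0} \<Longrightarrow> {p. x p \<noteq> 0} \<subseteq> cls \<alpha> \<Longrightarrow> x \<in> Vspace \<alpha>"
  unfolding span_space_def by blast

lemma delta_in_Vspace: "p \<in> cls \<alpha> \<Longrightarrow> delta p \<in> Vspace \<alpha>"
  by (rule Vspace_I) (auto simp: delta_def)

lemma Vspace_add:
  fixes x y :: "('v,'e) gpath \<Rightarrow> 'k::monoid_add"
  assumes "x \<in> Vspace \<alpha>" "y \<in> Vspace \<alpha>"
  shows "(\<lambda>p. x p + y p) \<in> Vspace \<alpha>"
proof -
  have "{p. x p + y p \<noteq> 0} \<subseteq> {p. x p \<noteq> 0} \<union> {p. y p \<noteq> 0}"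
    by auto
  then show ?thesis
    using assms unfolding span_space_def by (auto intro: finite_subset)
qed

lemma Vspace_mult:
  fixes x :: "('v,'e) gpath \<Rightarrow> 'k::mult_zero"
  assumes "x \<in> Vspace \<alpha>"
  shows "(\<lambda>p. c * x p) \<in> Vspace \<alpha>"
proof -
  have "{p. c * x p \<noteq> 0} \<subseteq> {p. x p \<noteq> 0}"
    by auto
  then show ?thesis
    using assms unfolding span_space_def by (auto intro: finite_subset)
qed

lemma gen_alg_Vspace: "a \<in> gen_alg V0 E1 r s \<Longrightarrow> x \<in> Vspace \<alpha> \<Longrightarrow> a x \<in> Vspace \<alpha>"
  unfolding span_space_def using gen_alg_finite_support gen_alg_support[OF _ tail_saturated_cls] by blast

lemma intertwiner_Vspace_scalar:
  fixes T :: "(('v,'e) gpath \<Rightarrow> 'k::field) \<Rightarrow> (('v,'e) gpath \<Rightarrow> 'k)"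
  assumes \<alpha>: "\<alpha> \<in> bpaths" and \<beta>: "\<beta> \<in> bpaths"
    and lin: "lin_map_on (Vspace \<alpha>) (Vspace \<beta>) T"
    and nonzero: "\<exists>x\<in>Vspace \<alpha>. T x \<noteq> (\<lambda>p. 0)"
    and commute: "\<forall>a\<in>gen_alg V0 E1 r s. \<forall>x\<in>Vspace \<alpha>. T (a x) = a (T x)"
  shows "cls \<alpha> = cls \<beta> \<and> (\<exists>z. \<forall>x\<in>Vspace \<alpha>. T x = (\<lambda>p. z * x p))"
proof -
  interpret generator_intertwiner V0 E1 r s \<alpha> "Vspace \<alpha>" T
  proof
    show "T (\<lambda>p. 0) = (\<lambda>p. 0)"
      using lin_map_on_zero[OF lin delta_in_Vspace[OF cls_self[OF \<alpha>]]] .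
    show "T x q = 0" if "x \<in> Vspace \<alpha>" "q \<notin> bpaths" for x q
      using lin that cls_subset unfolding lin_map_on_def span_space_def by blast
    show "T (op_p s v x) = op_p s v (T x)" if "v \<in> V0" "x \<in> Vspace \<alpha>" for v x
      using commute gen_p[OF that(1)] that(2) by blast
    show "T (op_s r s e x) = op_s r s e (T x)" if "e \<in> E1" "x \<in> Vspace \<alpha>" for e x
      using commute gen_s[OF that(1)] that(2) by blast
    show "T ((op_s r s e \<circ> op_sstar r s e) x) = (op_s r s e \<circ> op_sstar r s e) (T x)"
      if "e \<in> E1" "x \<in> Vspace \<alpha>" for e x
      using commute gen_comp[OF gen_s gen_sstar, OF that(1) that(1)] that(2) by blast
  qed (use \<alpha> delta_in_Vspace in auto)
  define z where "z = T (delta \<alpha>) \<alpha>"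
  have Tz: "T x = (\<lambda>p. z * x p)" if "x \<in> Vspace \<alpha>" for x
    using lin_map_on_eq_scalar_if_deltas[OF lin Vspace_I scalar_on_deltas] that
    unfolding z_def span_space_def by blast
  then have "z \<noteq> 0"
    using nonzero by auto
  moreover have "T (delta \<alpha>) \<in> Vspace \<beta>"
    using lin delta_in_Vspace[OF cls_self[OF \<alpha>]] unfolding lin_map_on_def by blast
  ultimately have "\<alpha> \<in> cls \<beta>"
    unfolding span_space_def z_def by blast
  then show ?thesis
    using cls_eq Tz by blast
qed

lemma scalar_map_Vspace_alg_Hom:
  assumes "z = 0 \<or> cls \<alpha> = cls \<beta>"
  shows "scalar_map (Vspace \<alpha>) (z::'k::field) \<in> alg_Hom V0 E1 r s \<alpha> \<beta>"
proof -
  have "(\<lambda>p. z * x p) \<in> Vspace \<beta>" if "x \<in> Vspace \<alpha>" for x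
  proof (cases "cls \<alpha> = cls \<beta>")
    case True
    then show ?thesis
      using Vspace_mult[OF that] by (simp add: span_space_def)
  qed (use assms in \<open>simp add: span_space_def\<close>)
  then have "lin_map_on (Vspace \<alpha>) (Vspace \<beta>) (scalar_map (Vspace \<alpha>) z)"
    using Vspace_add Vspace_mult by (blast intro: lin_map_on_scalar_map)
  moreover have "scalar_map (Vspace \<alpha>) z (a x) = a (scalar_map (Vspace \<alpha>) z x)"
    if "a \<in> gen_alg V0 E1 r s" "x \<in> Vspace \<alpha>" for a x
    using that gen_alg_Vspace[OF that] gen_alg_linear[OF that(1)] by simp
  ultimately show ?thesis
    unfolding alg_Hom_def by auto
qed

lemma alg_Hom_eq_scalar_map:
  fixes T :: "(('v,'e) gpath \<Rightarrow> 'k::field) \<Rightarrow> (('v,'e) gpath \<Rightarrow> 'k)"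
  assumes T: "T \<in> alg_Hom V0 E1 r s \<alpha> \<beta>" and \<alpha>: "\<alpha> \<in> bpaths" and \<beta>: "\<beta> \<in> bpaths"
  shows "\<exists>z. T = scalar_map (Vspace \<alpha>) z \<and> (z = 0 \<or> cls \<alpha> = cls \<beta>)"
proof -
  have lin: "lin_map_on (Vspace \<alpha>) (Vspace \<beta>) T"
    and commute: "\<forall>a\<in>gen_alg V0 E1 r s. \<forall>x\<in>Vspace \<alpha>. T (a x) = a (T x)"
    and ext: "T \<in> extensional (Vspace \<alpha>)"
    using T unfolding alg_Hom_def by auto
  obtain z where z: "\<forall>x\<in>Vspace \<alpha>. T x = (\<lambda>p. z * x p)" and "z = 0 \<or> cls \<alpha> = cls \<beta>"
  proof (cases "\<exists>x\<in>Vspace \<alpha>. T x \<noteq> (\<lambda>p. 0)")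
    case True
    then show ?thesis
      using intertwiner_Vspace_scalar[OF \<alpha> \<beta> lin _ commute] that by blast
  next
    case False
    then show ?thesis
      using that[of 0] by simp
  qed
  moreover have "T = scalar_map (Vspace \<alpha>) z"
    by (rule extensionalityI[OF ext restrict_extensional]) (simp add: z)
  ultimately show ?thesis
    by blast
qed

lemma bij_betw_scalar_alg_End:
  assumes \<alpha>: "\<alpha> \<in> bpaths"
  shows "bij_betw (\<lambda>z::'k::field. scalar_map (Vspace \<alpha>) z) UNIV (alg_Hom V0 E1 r s \<alpha> \<alpha>)"
proof (rule bij_betw_scalar_map)
  show "delta \<alpha> \<in> Vspace \<alpha>" "delta \<alpha> \<alpha> \<noteq> (0::'k)"
    using delta_in_Vspace[OF cls_self[OF \<alpha>]] by (auto simp: delta_def)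
  show "scalar_map (Vspace \<alpha>) z \<in> alg_Hom V0 E1 r s \<alpha> \<alpha>" for z :: 'k
    by (rule scalar_map_Vspace_alg_Hom) simp
  show "\<exists>z\<in>UNIV. T = scalar_map (Vspace \<alpha>) z" if "T \<in> alg_Hom V0 E1 r s \<alpha> \<alpha>" for T
    using alg_Hom_eq_scalar_map[OF that \<alpha> \<alpha>] by blast
qed

lemma alg_Hom_eq_zero:
  assumes "\<alpha> \<in> bpaths" "\<beta> \<in> bpaths" "cls \<alpha> \<noteq> cls \<beta>"
  shows "alg_Hom V0 E1 r s \<alpha> \<beta> = {\<lambda>x\<in>Vspace \<alpha>. (\<lambda>p. 0 :: 'k::field)}"
proof -
  have zero: "(\<lambda>x\<in>Vspace \<alpha>. (\<lambda>p. 0 :: 'k)) = scalar_map (Vspace \<alpha>) 0"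
    by simp
  show ?thesis
    unfolding zero
  proof (intro equalityI subsetI)
    fix T :: "_ \<Rightarrow> _ \<Rightarrow> 'k" assume T: "T \<in> alg_Hom V0 E1 r s \<alpha> \<beta>"
    obtain z where "T = scalar_map (Vspace \<alpha>) z" "z = 0 \<or> cls \<alpha> = cls \<beta>"
      using alg_Hom_eq_scalar_map[OF T assms(1,2)] by blast
    then show "T \<in> {scalar_map (Vspace \<alpha>) 0}"
      using assms(3) by simp
  qed (use scalar_map_Vspace_alg_Hom[of "0::'k" \<alpha> \<beta>] in simp)
qed

end

section \<open>The Hilbert space representation\<close>

abbreviation square_summable :: "('p \<Rightarrow> complex) \<Rightarrow> bool" where
  "square_summable x \<equiv> (\<lambda>p. (cmod (x p))\<^sup>2) summable_on UNIV"

lemma square_summable_add: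
  assumes "square_summable x" "square_summable y"
  shows "square_summable (\<lambda>p. x p + y p)"
proof (rule summable_on_comparison_test)
  show "(\<lambda>p. 2 * (cmod (x p))\<^sup>2 + 2 * (cmod (y p))\<^sup>2) summable_on UNIV"
    using assms by (intro summable_on_add summable_on_cmult_right)
  show "(cmod (x p + y p))\<^sup>2 \<le> 2 * (cmod (x p))\<^sup>2 + 2 * (cmod (y p))\<^sup>2" for p
  proof -
    have "(cmod (x p + y p))\<^sup>2 \<le> (cmod (x p) + cmod (y p))\<^sup>2"
      by (simp add: norm_triangle_ineq power_mono)
    also have "\<dots> \<le> 2 * (cmod (x p))\<^sup>2 + 2 * (cmod (y p))\<^sup>2"
      using sum_squares_bound[of "cmod (x p)" "cmod (y p)"] by (simp add: power2_sum)
    finally show ?thesis .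
  qed
qed simp

lemma square_summable_mult: "square_summable x \<Longrightarrow> square_summable (\<lambda>p. c * x p)"
  by (simp add: norm_mult power_mult_distrib summable_on_cmult_right)

lemma square_summable_restrict: "square_summable x \<Longrightarrow> square_summable (\<lambda>p. if p \<in> S then x p else 0)"
  by (rule summable_on_comparison_test) auto

lemma square_summable_finite_support:
  assumes "finite {p. x p \<noteq> 0}"
  shows "square_summable x"
proof -
  have "(\<lambda>p. (cmod (x p))\<^sup>2) summable_on {p. x p \<noteq> 0}"
    using assms by simp
  then show ?thesis
    by (rule summable_on_cong_neutral[THEN iffD1, rotated -1]) auto
qed

lemma reindexing_square_summable:
  assumes "reindexing a" "square_summable x"
  shows "square_summable (a x)"
    and "infsum (\<lambda>p. (cmod (a x p))\<^sup>2) UNIV \<le> infsum (\<lambda>p. (cmod (x p))\<^sup>2) UNIV"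
proof -
  obtain S g where g: "inj_on g S" and a: "\<And>x. a x = (\<lambda>\<beta>. if \<beta> \<in> S then x (g \<beta>) else 0)"
    using assms(1) unfolding reindexing_def by blast
  define f where "f = (\<lambda>p. (cmod (x p))\<^sup>2)"
  have f_image: "f summable_on g ` S"
    using summable_on_subset_banach assms(2) unfolding f_def by blast
  then have "(f \<circ> g) summable_on S"
    using summable_on_reindex[OF g] by blast
  moreover have "(f \<circ> g) summable_on S \<longleftrightarrow> square_summable (a x)"
    by (rule summable_on_cong_neutral) (auto simp: f_def a)
  ultimately show "square_summable (a x)"
    by blast
  have "infsum (\<lambda>p. (cmod (a x p))\<^sup>2) UNIV = infsum (f \<circ> g) S"
    by (rule infsum_cong_neutral) (auto simp: f_def a)
  also have "\<dots> = infsum f (g ` S)"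
    by (rule infsum_reindex[OF g, symmetric])
  also have "\<dots> \<le> infsum f UNIV"
    by (rule infsum_mono_neutral) (use f_image assms(2) in \<open>auto simp: f_def\<close>)
  finally show "infsum (\<lambda>p. (cmod (a x p))\<^sup>2) UNIV \<le> infsum (\<lambda>p. (cmod (x p))\<^sup>2) UNIV"
    unfolding f_def .
qed

lemma gen_alg_square_summable:
  assumes "a \<in> gen_alg V0 E1 r s" "square_summable x"
  shows "square_summable (a x)"
  using assms
  by (induction arbitrary: x)
    (auto intro: reindexing_square_summable(1) reindexing_op_p reindexing_op_s reindexing_op_sstar
      square_summable_add square_summable_mult)

lemma l2_space_finite_support: "finite {p. x p \<noteq> 0} \<Longrightarrow> {p. x p \<noteq> 0} \<subseteq> A \<Longrightarrow> x \<in> l2_space A"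
  unfolding l2_space_def using square_summable_finite_support by blast

lemma l2_space_square_summable: "x \<in> l2_space A \<Longrightarrow> square_summable x"
  unfolding l2_space_def by blast

lemma l2_space_add:
  assumes "x \<in> l2_space A" "y \<in> l2_space A"
  shows "(\<lambda>p. x p + y p) \<in> l2_space A"
proof -
  have "{p. x p + y p \<noteq> 0} \<subseteq> {p. x p \<noteq> 0} \<union> {p. y p \<noteq> 0}"
    by auto
  then show ?thesis
    using assms square_summable_add unfolding l2_space_def by blast
qed

lemma l2_space_mult: "x \<in> l2_space A \<Longrightarrow> (\<lambda>p. c * x p) \<in> l2_space A"
  unfolding l2_space_def using square_summable_mult by fastforce

lemma l2norm_nonneg: "0 \<le> l2norm x"
  unfolding l2norm_def by (simp add: infsum_nonneg)

lemma cmod_le_l2norm: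
  assumes "square_summable y"
  shows "cmod (y q) \<le> l2norm y"
proof -
  have "(cmod (y q))\<^sup>2 \<le> infsum (\<lambda>p. (cmod (y p))\<^sup>2) UNIV"
    using finite_sum_le_infsum[OF assms, of "{q}"] by simp
  then show ?thesis
    unfolding l2norm_def using real_le_rsqrt by blast
qed

lemma l2norm_mult: "l2norm (\<lambda>p. c * x p) = cmod c * l2norm x"
proof -
  have "infsum (\<lambda>p. (cmod (c * x p))\<^sup>2) UNIV = (cmod c)\<^sup>2 * infsum (\<lambda>p. (cmod (x p))\<^sup>2) UNIV"
    by (simp add: norm_mult power_mult_distrib infsum_cmult_right')
  then show ?thesis
    unfolding l2norm_def by (simp add: real_sqrt_mult)
qed

lemma l2norm_delta: "l2norm (delta p :: 'p \<Rightarrow> complex) = 1"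
proof -
  have "infsum (\<lambda>q. (cmod (delta p q :: complex))\<^sup>2) UNIV = infsum (\<lambda>q. (cmod (delta p q :: complex))\<^sup>2) {p}"
    by (rule infsum_cong_neutral) (auto simp: delta_def)
  then show ?thesis
    unfolding l2norm_def by (simp add: delta_def)
qed

lemma l2norm_tail_small:
  assumes x: "square_summable x" and \<epsilon>: "\<epsilon> > 0"
  obtains F where "finite F" and "l2norm (\<lambda>p. if p \<in> F then 0 else x p) \<le> \<epsilon>"
proof -
  define f where "f = (\<lambda>p. (cmod (x p))\<^sup>2)"
  obtain F where F: "finite F" "dist (sum f F) (infsum f UNIV) \<le> \<epsilon>\<^sup>2"
    using infsum_finite_approximation[of f UNIV "\<epsilon>\<^sup>2"] x \<epsilon> unfolding f_def by auto
  have "infsum f (UNIV - F) = infsum f UNIV - sum f F"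
    using infsum_Diff[of f UNIV F] x F(1) unfolding f_def by simp
  also have "\<dots> \<le> \<epsilon>\<^sup>2"
    using F(2) by (simp add: dist_real_def)
  finally have "infsum (\<lambda>p. (cmod (if p \<in> F then 0 else x p))\<^sup>2) UNIV \<le> \<epsilon>\<^sup>2"
    using infsum_cong_neutral[of "UNIV - F" UNIV f "\<lambda>p. (cmod (if p \<in> F then 0 else x p))\<^sup>2"]
    by (simp add: f_def)
  then have "l2norm (\<lambda>p. if p \<in> F then 0 else x p) \<le> sqrt (\<epsilon>\<^sup>2)"
    unfolding l2norm_def using real_sqrt_le_mono by blast
  then show ?thesis
    using that F(1) \<epsilon> by simp
qed

lemma lin_map_on_l2_eq_scalar:
  assumes lin: "lin_map_on (l2_space A) (l2_space B) T"
    and bounded: "bounded_on (l2_space A) T"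
    and finite: "\<And>x. x \<in> l2_space A \<Longrightarrow> finite {p. x p \<noteq> 0} \<Longrightarrow> T x = (\<lambda>p. z * x p)"
    and x: "x \<in> l2_space A"
  shows "T x = (\<lambda>p. z * x p)"
proof
  fix q
  obtain C where C: "\<And>y. y \<in> l2_space A \<Longrightarrow> l2norm (T y) \<le> C * l2norm y"
    using bounded unfolding bounded_on_def by blast
  define K where "K = \<bar>C\<bar> + cmod z + 1"
  have K: "K > 0"
    unfolding K_def by (simp add: add_nonneg_pos)
  have "cmod (T x q - z * x q) \<le> 0 + \<epsilon>" if \<epsilon>: "\<epsilon> > 0" for \<epsilon>
  proof -
    obtain F where F: "finite F" and small: "l2norm (\<lambda>p. if p \<in> F then 0 else x p) \<le> \<epsilon> / K"
      using l2norm_tail_small[of x "\<epsilon> / K"] x \<epsilon> K unfolding l2_space_def by auto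
    define y where "y = (\<lambda>p. if p \<in> F then 0 else x p)"
    define x\<^sub>F where "x\<^sub>F = (\<lambda>p. if p \<in> F then x p else 0)"
    have "y = (\<lambda>p. if p \<in> - F then x p else 0)"
      by (auto simp: y_def)
    then have y: "y \<in> l2_space A"
      using x square_summable_restrict[of x "- F"] unfolding l2_space_def by auto
    have "{p. x\<^sub>F p \<noteq> 0} \<subseteq> F"
      by (auto simp: x\<^sub>F_def)
    then have fin: "finite {p. x\<^sub>F p \<noteq> 0}"
      using F finite_subset by blast
    have x\<^sub>F: "x\<^sub>F \<in> l2_space A"
      by (rule l2_space_finite_support[OF fin]) (use x in \<open>auto simp: l2_space_def x\<^sub>F_def\<close>)
    have Tx\<^sub>F: "T x\<^sub>F = (\<lambda>p. z * x\<^sub>F p)"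
      by (rule finite[OF x\<^sub>F fin])
    have split: "x = (\<lambda>p. x\<^sub>F p + y p)"
      by (auto simp: x\<^sub>F_def y_def)
    then have "T x = (\<lambda>p. T x\<^sub>F p + T y p)"
      using lin x\<^sub>F y unfolding lin_map_on_def by metis
    then have "T x q - z * x q = T y q - z * y q"
      using fun_cong[OF split, of q] by (simp add: Tx\<^sub>F algebra_simps)
    then have "cmod (T x q - z * x q) \<le> cmod (T y q) + cmod z * cmod (y q)"
      by (metis norm_mult norm_triangle_ineq4)
    also have "\<dots> \<le> \<bar>C\<bar> * l2norm y + cmod z * l2norm y"
    proof (rule add_mono)
      have "T y \<in> l2_space B"
        using lin y unfolding lin_map_on_def by blast
      then have "cmod (T y q) \<le> l2norm (T y)"
        by (intro cmod_le_l2norm l2_space_square_summable)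
      also have "\<dots> \<le> C * l2norm y"
        by (rule C[OF y])
      also have "\<dots> \<le> \<bar>C\<bar> * l2norm y"
        by (rule mult_right_mono[OF abs_ge_self l2norm_nonneg])
      finally show "cmod (T y q) \<le> \<bar>C\<bar> * l2norm y" .
      show "cmod z * cmod (y q) \<le> cmod z * l2norm y"
        using cmod_le_l2norm[OF l2_space_square_summable[OF y]] by (simp add: mult_left_mono)
    qed
    also have "\<dots> \<le> K * l2norm y"
      unfolding K_def using l2norm_nonneg[of y] by (simp add: distrib_right)
    also have "\<dots> \<le> \<epsilon>"
      using small K unfolding y_def by (simp add: field_simps)
    finally show ?thesis
      by simp
  qed
  then show "T x q = z * x q"
    using field_le_epsilon[of "cmod (T x q - z * x q)" 0] by simp
qed

context graph
begin

abbreviation "Hspace \<alpha> \<equiv> l2_space (cls \<alpha>)"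

lemma delta_in_Hspace: "p \<in> cls \<alpha> \<Longrightarrow> delta p \<in> Hspace \<alpha>"
  by (rule l2_space_finite_support) (auto simp: delta_def split: if_splits)

lemma Hspace_subset: "x \<in> Hspace \<alpha> \<Longrightarrow> x \<in> l2_space bpaths"
  using cls_subset unfolding l2_space_def by blast

lemma reindexing_cstar_image:
  assumes a: "a \<in> gen_alg V0 E1 r s" and reindex: "reindexing a"
  shows "a \<in> cstar_image V0 E1 r s"
proof -
  have "lin_map_on (l2_space bpaths) (l2_space bpaths) a"
    unfolding lin_map_on_def l2_space_def
    using gen_alg_support[OF a tail_saturated_bpaths] gen_alg_square_summable[OF a]
      gen_alg_linear[OF a] by blast
  moreover have "bounded_on (l2_space bpaths) a"
    unfolding bounded_on_def l2norm_def l2_space_def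
    using reindexing_square_summable(2)[OF reindex] by (auto intro!: exI[of _ 1])
  moreover have "l2norm (\<lambda>p. a x p - a x p) \<le> \<epsilon> * l2norm x" if "\<epsilon> > 0" for \<epsilon> x
    using that l2norm_nonneg[of x] by (simp add: l2norm_def)
  ultimately show ?thesis
    unfolding cstar_image_def using a by blast
qed

lemma cstar_image_Hspace:
  assumes a: "a \<in> cstar_image V0 E1 r s" and x: "x \<in> Hspace \<alpha>"
  shows "a x \<in> Hspace \<alpha>"
proof -
  have x_bpaths: "x \<in> l2_space bpaths"
    using Hspace_subset[OF x] .
  have ax: "square_summable (a x)"
    using a x_bpaths unfolding cstar_image_def lin_map_on_def l2_space_def by blast
  have "a x q = 0" if q: "q \<notin> cls \<alpha>" for q
  proof -
    \<comment> \<open>Elements of gen_alg keep supports inside cls \<alpha>, and a is a norm limit of them.\<close>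
    have "cmod (a x q) \<le> 0 + e" if e: "e > 0" for e
    proof -
      define \<epsilon> where "\<epsilon> = e / (l2norm x + 1)"
      have \<epsilon>: "\<epsilon> > 0" "\<epsilon> * l2norm x \<le> e"
        using e l2norm_nonneg[of x] by (auto simp: \<epsilon>_def field_simps)
      obtain b where b: "b \<in> gen_alg V0 E1 r s"
        and close: "l2norm (\<lambda>p. a x p - b x p) \<le> \<epsilon> * l2norm x"
        using a \<epsilon>(1) x_bpaths unfolding cstar_image_def by blast
      have "b x q = 0"
        using gen_alg_support[OF b tail_saturated_cls] x q unfolding l2_space_def by blast
      moreover have "square_summable (\<lambda>p. a x p - b x p)"
        using square_summable_add[OF ax square_summable_mult[of "b x" "-1"]]
          gen_alg_square_summable[OF b] x unfolding l2_space_def by simp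
      ultimately have "cmod (a x q) \<le> l2norm (\<lambda>p. a x p - b x p)"
        using cmod_le_l2norm[of "\<lambda>p. a x p - b x p" q] by simp
      then show ?thesis
        using close \<epsilon>(2) by simp
    qed
    then show ?thesis
      using field_le_epsilon[of "cmod (a x q)" 0] by simp
  qed
  then show ?thesis
    unfolding l2_space_def using ax by blast
qed

lemma cstar_image_mult:
  "a \<in> cstar_image V0 E1 r s \<Longrightarrow> x \<in> l2_space bpaths \<Longrightarrow> a (\<lambda>p. c * x p) = (\<lambda>p. c * a x p)"
  unfolding cstar_image_def lin_map_on_def by blast

lemma intertwiner_Hspace_scalar:
  assumes \<alpha>: "\<alpha> \<in> bpaths" and \<beta>: "\<beta> \<in> bpaths"
    and lin: "lin_map_on (Hspace \<alpha>) (Hspace \<beta>) T"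
    and bounded: "bounded_on (Hspace \<alpha>) T"
    and nonzero: "\<exists>x\<in>Hspace \<alpha>. T x \<noteq> (\<lambda>p. 0)"
    and commute: "\<forall>a\<in>cstar_image V0 E1 r s. \<forall>x\<in>Hspace \<alpha>. T (a x) = a (T x)"
  shows "cls \<alpha> = cls \<beta> \<and> (\<exists>z. \<forall>x\<in>Hspace \<alpha>. T x = (\<lambda>p. z * x p))"
proof -
  have cstar_p: "op_p s v \<in> cstar_image V0 E1 r s" if "v \<in> V0" for v
    by (rule reindexing_cstar_image[OF gen_p[OF that] reindexing_op_p])
  have cstar_s: "op_s r s e \<in> cstar_image V0 E1 r s" if "e \<in> E1" for e
    by (rule reindexing_cstar_image[OF gen_s[OF that] reindexing_op_s])
  have cstar_s_sstar: "op_s r s e \<circ> op_sstar r s e \<in> cstar_image V0 E1 r s" if "e \<in> E1" for e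
    by (rule reindexing_cstar_image[OF gen_comp[OF gen_s gen_sstar, OF that that] reindexing_op_s_op_sstar])
  interpret generator_intertwiner V0 E1 r s \<alpha> "Hspace \<alpha>" T
  proof
    show "T (\<lambda>p. 0) = (\<lambda>p. 0)"
      using lin_map_on_zero[OF lin delta_in_Hspace[OF cls_self[OF \<alpha>]]] .
    show "T x q = 0" if "x \<in> Hspace \<alpha>" "q \<notin> bpaths" for x q
      using lin that cls_subset unfolding lin_map_on_def l2_space_def by blast
    show "T (op_p s v x) = op_p s v (T x)" if "v \<in> V0" "x \<in> Hspace \<alpha>" for v x
      using commute cstar_p[OF that(1)] that(2) by blast
    show "T (op_s r s e x) = op_s r s e (T x)" if "e \<in> E1" "x \<in> Hspace \<alpha>" for e x
      using commute cstar_s[OF that(1)] that(2) by blast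
    show "T ((op_s r s e \<circ> op_sstar r s e) x) = (op_s r s e \<circ> op_sstar r s e) (T x)"
      if "e \<in> E1" "x \<in> Hspace \<alpha>" for e x
      using commute cstar_s_sstar[OF that(1)] that(2) by blast
  qed (use \<alpha> delta_in_Hspace in auto)
  define z where "z = T (delta \<alpha>) \<alpha>"
  have "T x = (\<lambda>p. z * x p)" if "x \<in> Hspace \<alpha>" and "finite {p. x p \<noteq> 0}" for x
    using lin_map_on_eq_scalar_if_deltas[OF lin l2_space_finite_support scalar_on_deltas] that
    unfolding z_def l2_space_def by blast
  then have Tz: "T x = (\<lambda>p. z * x p)" if "x \<in> Hspace \<alpha>" for x
    using lin_map_on_l2_eq_scalar[OF lin bounded] that by blast
  then have "z \<noteq> 0"
    using nonzero by auto
  moreover have "T (delta \<alpha>) \<in> Hspace \<beta>"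
    using lin delta_in_Hspace[OF cls_self[OF \<alpha>]] unfolding lin_map_on_def by blast
  ultimately have "\<alpha> \<in> cls \<beta>"
    unfolding l2_space_def z_def by blast
  then show ?thesis
    using cls_eq Tz by blast
qed

lemma scalar_map_Hspace_cstar_Hom:
  assumes "z = 0 \<or> cls \<alpha> = cls \<beta>"
  shows "scalar_map (Hspace \<alpha>) z \<in> cstar_Hom V0 E1 r s \<alpha> \<beta>"
proof -
  have "(\<lambda>p. z * x p) \<in> Hspace \<beta>" if "x \<in> Hspace \<alpha>" for x
  proof (cases "cls \<alpha> = cls \<beta>")
    case True
    then show ?thesis
      using l2_space_mult[OF that] by simp
  qed (use assms l2_space_finite_support[of "\<lambda>p. 0"] in simp)
  then have "lin_map_on (Hspace \<alpha>) (Hspace \<beta>) (scalar_map (Hspace \<alpha>) z)"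
    using l2_space_add l2_space_mult by (blast intro: lin_map_on_scalar_map)
  moreover have "bounded_on (Hspace \<alpha>) (scalar_map (Hspace \<alpha>) z)"
    unfolding bounded_on_def by (auto simp: l2norm_mult)
  moreover have "scalar_map (Hspace \<alpha>) z (a x) = a (scalar_map (Hspace \<alpha>) z x)"
    if "a \<in> cstar_image V0 E1 r s" "x \<in> Hspace \<alpha>" for a x
    using that cstar_image_Hspace[OF that] cstar_image_mult[OF that(1) Hspace_subset[OF that(2)]]
    by simp
  ultimately show ?thesis
    unfolding cstar_Hom_def by auto
qed

lemma cstar_Hom_eq_scalar_map:
  assumes T: "T \<in> cstar_Hom V0 E1 r s \<alpha> \<beta>" and \<alpha>: "\<alpha> \<in> bpaths" and \<beta>: "\<beta> \<in> bpaths"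
  shows "\<exists>z. T = scalar_map (Hspace \<alpha>) z \<and> (z = 0 \<or> cls \<alpha> = cls \<beta>)"
proof -
  have lin: "lin_map_on (Hspace \<alpha>) (Hspace \<beta>) T"
    and bounded: "bounded_on (Hspace \<alpha>) T"
    and commute: "\<forall>a\<in>cstar_image V0 E1 r s. \<forall>x\<in>Hspace \<alpha>. T (a x) = a (T x)"
    and ext: "T \<in> extensional (Hspace \<alpha>)"
    using T unfolding cstar_Hom_def by auto
  obtain z where z: "\<forall>x\<in>Hspace \<alpha>. T x = (\<lambda>p. z * x p)" and "z = 0 \<or> cls \<alpha> = cls \<beta>"
  proof (cases "\<exists>x\<in>Hspace \<alpha>. T x \<noteq> (\<lambda>p. 0)")
    case True
    then show ?thesis
      using intertwiner_Hspace_scalar[OF \<alpha> \<beta> lin bounded _ commute] that by blast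
  next
    case False
    then show ?thesis
      using that[of 0] by simp
  qed
  moreover have "T = scalar_map (Hspace \<alpha>) z"
    by (rule extensionalityI[OF ext restrict_extensional]) (simp add: z)
  ultimately show ?thesis
    by blast
qed

lemma bij_betw_scalar_cstar_End:
  assumes \<alpha>: "\<alpha> \<in> bpaths"
  shows "bij_betw (scalar_map (Hspace \<alpha>)) UNIV (cstar_Hom V0 E1 r s \<alpha> \<alpha>)"
proof (rule bij_betw_scalar_map)
  show "delta \<alpha> \<in> Hspace \<alpha>" "delta \<alpha> \<alpha> \<noteq> (0::complex)"
    using delta_in_Hspace[OF cls_self[OF \<alpha>]] by (auto simp: delta_def)
  show "scalar_map (Hspace \<alpha>) z \<in> cstar_Hom V0 E1 r s \<alpha> \<alpha>" for z
    by (rule scalar_map_Hspace_cstar_Hom) simp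
  show "\<exists>z\<in>UNIV. T = scalar_map (Hspace \<alpha>) z" if "T \<in> cstar_Hom V0 E1 r s \<alpha> \<alpha>" for T
    using cstar_Hom_eq_scalar_map[OF that \<alpha> \<alpha>] by blast
qed

lemma scalar_map_cstar_Unitary:
  assumes z: "cmod z = 1"
  shows "scalar_map (Hspace \<alpha>) z \<in> cstar_Unitary V0 E1 r s \<alpha>"
proof -
  have "z \<noteq> 0"
    using z by auto
  have "x \<in> scalar_map (Hspace \<alpha>) z ` Hspace \<alpha>" if "x \<in> Hspace \<alpha>" for x
  proof
    show "(\<lambda>p. inverse z * x p) \<in> Hspace \<alpha>"
      using l2_space_mult[OF that] .
    then show "x = scalar_map (Hspace \<alpha>) z (\<lambda>p. inverse z * x p)"
      using \<open>z \<noteq> 0\<close> by (auto simp: fun_eq_iff)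
  qed
  then have "scalar_map (Hspace \<alpha>) z ` Hspace \<alpha> = Hspace \<alpha>"
    using l2_space_mult by auto
  then show ?thesis
    unfolding cstar_Unitary_def using scalar_map_Hspace_cstar_Hom[of z \<alpha> \<alpha>] z
    by (simp add: l2norm_mult)
qed

lemma bij_betw_scalar_cstar_Unitary:
  assumes \<alpha>: "\<alpha> \<in> bpaths"
  shows "bij_betw (scalar_map (Hspace \<alpha>)) {z. cmod z = 1} (cstar_Unitary V0 E1 r s \<alpha>)"
proof (rule bij_betw_scalar_map)
  have \<delta>: "delta \<alpha> \<in> Hspace \<alpha>"
    using delta_in_Hspace[OF cls_self[OF \<alpha>]] .
  then show "delta \<alpha> \<in> Hspace \<alpha>" "delta \<alpha> \<alpha> \<noteq> (0::complex)"
    by (auto simp: delta_def)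
  show "scalar_map (Hspace \<alpha>) z \<in> cstar_Unitary V0 E1 r s \<alpha>" if "z \<in> {z. cmod z = 1}" for z
    using scalar_map_cstar_Unitary that by simp
  show "\<exists>z\<in>{z. cmod z = 1}. T = scalar_map (Hspace \<alpha>) z" if T: "T \<in> cstar_Unitary V0 E1 r s \<alpha>" for T
  proof -
    have "T \<in> cstar_Hom V0 E1 r s \<alpha> \<alpha>"
      using T unfolding cstar_Unitary_def by blast
    then obtain z where Tz: "T = scalar_map (Hspace \<alpha>) z"
      using cstar_Hom_eq_scalar_map[OF _ \<alpha> \<alpha>] by blast
    have "l2norm (T (delta \<alpha>)) = l2norm (delta \<alpha> :: _ \<Rightarrow> complex)"
      using T \<delta> unfolding cstar_Unitary_def by blast
    then have "cmod z = 1"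
      using Tz \<delta> by (simp add: l2norm_mult l2norm_delta)
    then show ?thesis
      using Tz by blast
  qed
qed

lemma cstar_Hom_eq_zero:
  assumes "\<alpha> \<in> bpaths" "\<beta> \<in> bpaths" "cls \<alpha> \<noteq> cls \<beta>"
  shows "cstar_Hom V0 E1 r s \<alpha> \<beta> = {\<lambda>x\<in>Hspace \<alpha>. (\<lambda>p. 0)}"
proof (intro equalityI subsetI)
  fix T assume T: "T \<in> cstar_Hom V0 E1 r s \<alpha> \<beta>"
  obtain z where "T = scalar_map (Hspace \<alpha>) z" "z = 0 \<or> cls \<alpha> = cls \<beta>"
    using cstar_Hom_eq_scalar_map[OF T assms(1,2)] by blast
  then show "T \<in> {\<lambda>x\<in>Hspace \<alpha>. (\<lambda>p. 0)}"
    using assms(3) by simp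
qed (use scalar_map_Hspace_cstar_Hom[of 0 \<alpha> \<beta>] in simp)

end

theorem proposition3p13:
  fixes V0 :: "'v set" and E1 :: "'e set" and r s :: "'e \<Rightarrow> 'v"
  assumes "r ` E1 \<subseteq> V0" and "s ` E1 \<subseteq> V0"
  shows
  "(\<forall>\<alpha>\<in>boundary_paths V0 E1 r s. \<forall>\<beta>\<in>boundary_paths V0 E1 r s.
      \<forall>T :: (('v,'e) gpath \<Rightarrow> 'k::field) \<Rightarrow> (('v,'e) gpath \<Rightarrow> 'k).
        lin_map_on (span_space V0 E1 r s \<alpha>) (span_space V0 E1 r s \<beta>) T
        \<and> (\<exists>x\<in>span_space V0 E1 r s \<alpha>. T x \<noteq> (\<lambda>p. 0))
        \<and> (\<forall>a\<in>gen_alg V0 E1 r s. \<forall>x\<in>span_space V0 E1 r s \<alpha>. T (a x) = a (T x))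
        \<longrightarrow> tail_class V0 E1 r s \<alpha> = tail_class V0 E1 r s \<beta>
            \<and> (\<exists>z::'k. \<forall>x\<in>span_space V0 E1 r s \<alpha>. T x = (\<lambda>p. z * x p)))
   \<and> (\<forall>\<alpha>\<in>boundary_paths V0 E1 r s.
        bij_betw (\<lambda>z::'k. \<lambda>x\<in>span_space V0 E1 r s \<alpha>. (\<lambda>p. z * x p)) UNIV (alg_Hom V0 E1 r s \<alpha> \<alpha>))
   \<and> (\<forall>\<alpha>\<in>boundary_paths V0 E1 r s. \<forall>\<beta>\<in>boundary_paths V0 E1 r s.
        tail_class V0 E1 r s \<alpha> \<noteq> tail_class V0 E1 r s \<beta> \<longrightarrow>
          alg_Hom V0 E1 r s \<alpha> \<beta> = {\<lambda>x\<in>span_space V0 E1 r s \<alpha>. (\<lambda>p. 0 :: 'k)})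
   \<and> (\<forall>\<alpha>\<in>boundary_paths V0 E1 r s. \<forall>\<beta>\<in>boundary_paths V0 E1 r s.
      \<forall>T. lin_map_on (l2_space (tail_class V0 E1 r s \<alpha>)) (l2_space (tail_class V0 E1 r s \<beta>)) T
        \<and> bounded_on (l2_space (tail_class V0 E1 r s \<alpha>)) T
        \<and> (\<exists>x\<in>l2_space (tail_class V0 E1 r s \<alpha>). T x \<noteq> (\<lambda>p. 0))
        \<and> (\<forall>a\<in>cstar_image V0 E1 r s. \<forall>x\<in>l2_space (tail_class V0 E1 r s \<alpha>). T (a x) = a (T x))
        \<longrightarrow> tail_class V0 E1 r s \<alpha> = tail_class V0 E1 r s \<beta>
            \<and> (\<exists>z::complex. \<forall>x\<in>l2_space (tail_class V0 E1 r s \<alpha>). T x = (\<lambda>p. z * x p)))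
   \<and> (\<forall>\<alpha>\<in>boundary_paths V0 E1 r s.
        bij_betw (\<lambda>z::complex. \<lambda>x\<in>l2_space (tail_class V0 E1 r s \<alpha>). (\<lambda>p. z * x p))
          UNIV (cstar_Hom V0 E1 r s \<alpha> \<alpha>)
      \<and> bij_betw (\<lambda>z::complex. \<lambda>x\<in>l2_space (tail_class V0 E1 r s \<alpha>). (\<lambda>p. z * x p))
          {z. cmod z = 1} (cstar_Unitary V0 E1 r s \<alpha>))
   \<and> (\<forall>\<alpha>\<in>boundary_paths V0 E1 r s. \<forall>\<beta>\<in>boundary_paths V0 E1 r s.
        tail_class V0 E1 r s \<alpha> \<noteq> tail_class V0 E1 r s \<beta> \<longrightarrow>
          cstar_Hom V0 E1 r s \<alpha> \<beta> = {\<lambda>x\<in>l2_space (tail_class V0 E1 r s \<alpha>). (\<lambda>p. 0)})"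
proof -
  interpret graph V0 E1 r s
    using assms by unfold_locales
  show ?thesis
    by (intro conjI)
      (use intertwiner_Vspace_scalar in blast,
       use bij_betw_scalar_alg_End in blast,
       use alg_Hom_eq_zero in blast,
       use intertwiner_Hspace_scalar in blast,
       use bij_betw_scalar_cstar_End bij_betw_scalar_cstar_Unitary in blast,
       use cstar_Hom_eq_zero in blast)
qed

end
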